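(* For every integer $n\ge 14$, $\operatorname{str}(Q_n)\le 2^n+2^{n-3}+28$.
   Context: $Q_n$ is the $n$-dimensional hypercube: vertices are the binary strings of length $n$, two adjacent iff they differ in exactly one position. For a bijection $f:V(G)\to\{1,\dots,|V(G)|\}$, $\operatorname{str}_f(G)=\max\{f(u)+f(v):uv\in E(G)\}$, and the strength $\operatorname{str}(G)$ is the minimum of $\operatorname{str}_f(G)$ over all such bijections $f$. *)

theory Defs
  imports Main
begin

definition hypercube_vertices :: "nat \<Rightarrow> bool list set" where
  "hypercube_vertices n = {xs. length xs = n}"

definition hypercube_adj :: "nat \<Rightarrow> bool list \<Rightarrow> bool list \<Rightarrow> bool" where
  "hypercube_adj n u v \<longleftrightarrow> u \<in> hypercube_vertices n \<and> v \<in> hypercube_vertices n \<and>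
     card {i. i < n \<and> u ! i \<noteq> v ! i} = 1"

definition str_f :: "'a set \<Rightarrow> ('a \<Rightarrow> 'a \<Rightarrow> bool) \<Rightarrow> ('a \<Rightarrow> nat) \<Rightarrow> nat" where
  "str_f V E f = Max {f u + f v | u v. u \<in> V \<and> v \<in> V \<and> E u v}"

definition graph_strength :: "'a set \<Rightarrow> ('a \<Rightarrow> 'a \<Rightarrow> bool) \<Rightarrow> nat" where
  "graph_strength V E = Min {str_f V E f | f. bij_betw f V {1..card V}}"

end

theory Submission
  imports Defs "HOL.Binomial_Plus"
begin

text \<open>Rank the strings of length \<open>k\<close> by Hamming weight. Flipping one bit moves the weight
  by one, and then the rank moves by at most \<open>B(k) = (\<Sum>j<k. j choose (j div 2))\<close>. Label a vertex
  \<open>v = a # x\<close> of \<open>Q\<^sub>n\<close> by \<open>rank x + 1\<close> if \<open>v\<close> has even weight and by \<open>2\<^sup>n - rank x\<close> otherwise;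
  this is a bijection onto \<open>{1..2\<^sup>n}\<close>. Adjacent vertices have weights of opposite parity and tails
  \<open>x, y\<close> that are equal or adjacent, so their labels sum to
  \<open>2\<^sup>n + 1 + rank x - rank y \<le> 2\<^sup>n + 1 + B(n - 1)\<close>, and \<open>B(k) < 2 ^ (k - 2)\<close> for \<open>k \<ge> 12\<close>.\<close>

definition weight :: "bool list \<Rightarrow> nat" where
  "weight xs = length (filter id xs)"

lemma weight_Nil [simp]: "weight [] = 0"
  by (simp add: weight_def)

lemma weight_Cons [simp]: "weight (b # xs) = weight xs + (if b then 1 else 0)"
  by (simp add: weight_def)

lemma weight_le_length: "weight xs \<le> length xs"
  by (simp add: weight_def)

fun hamming_dist :: "bool list \<Rightarrow> bool list \<Rightarrow> nat" where
  "hamming_dist (a # u) (b # v) = (if a = b then 0 else 1) + hamming_dist u v"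
| "hamming_dist _ _ = 0"

lemma hamming_dist_sym: "hamming_dist x y = hamming_dist y x"
  by (induction x y rule: hamming_dist.induct) auto

lemma hamming_dist_eq_0_iff:
  "length x = length y \<Longrightarrow> hamming_dist x y = 0 \<longleftrightarrow> x = y"
  by (induction x y rule: hamming_dist.induct) auto

lemma hamming_dist_Cons_eq_1_iff:
  "length x = length y \<Longrightarrow>
    hamming_dist (a # x) (b # y) = 1 \<longleftrightarrow> (a = b \<and> hamming_dist x y = 1) \<or> (a \<noteq> b \<and> x = y)"
  using hamming_dist_eq_0_iff[of x y] by auto

lemma hamming_dist_eq_card:
  "length u = length v \<Longrightarrow> hamming_dist u v = card {i. i < length u \<and> u ! i \<noteq> v ! i}"
proof (induction u v rule: hamming_dist.induct)
  case (1 a u b v)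
  have "{i. i < length (a # u) \<and> (a # u) ! i \<noteq> (b # v) ! i}
      = (if a = b then {} else {0}) \<union> Suc ` {i. i < length u \<and> u ! i \<noteq> v ! i}"
    by (auto simp: image_iff less_Suc_eq_0_disj)
  then show ?case
    using 1 by (simp add: card_image card_insert_if)
qed auto

lemma weight_Suc_if_hamming_dist_1:
  "length x = length y \<Longrightarrow> hamming_dist x y = 1 \<Longrightarrow> weight y = Suc (weight x) \<or> weight x = Suc (weight y)"
proof (induction x y rule: hamming_dist.induct)
  case (1 a x b y)
  then show ?case
    using hamming_dist_Cons_eq_1_iff[of x y a b] by (auto split: if_splits)
qed auto

definition choose_partial_sum :: "nat \<Rightarrow> nat \<Rightarrow> nat" where
  "choose_partial_sum k w = (\<Sum>j<w. k choose j)"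

lemma choose_partial_sum_0 [simp]: "choose_partial_sum k 0 = 0"
  by (simp add: choose_partial_sum_def)

lemma choose_partial_sum_Suc: "choose_partial_sum k (Suc w) = choose_partial_sum k w + (k choose w)"
  by (simp add: choose_partial_sum_def)

lemma choose_partial_sum_mono: "w \<le> w' \<Longrightarrow> choose_partial_sum k w \<le> choose_partial_sum k w'"
  unfolding choose_partial_sum_def by (rule sum_mono2) auto

lemma choose_partial_sum_Suc_Suc:
  "choose_partial_sum (Suc k) (Suc w) = choose_partial_sum k (Suc w) + choose_partial_sum k w"
  by (induction w) (simp_all add: choose_partial_sum_Suc)

lemma choose_partial_sum_full: "choose_partial_sum k (Suc k) = 2 ^ k"
  by (simp add: choose_partial_sum_def lessThan_Suc_atMost choose_row_sum)

text \<open>The position of \<open>x\<close> in an enumeration of the strings of length \<open>k\<close> that lists the weight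
  classes in increasing order; within a class, strings starting with \<open>True\<close> come first, and ties
  are broken recursively by the tail.\<close>

fun weight_rank :: "bool list \<Rightarrow> nat" where
  "weight_rank [] = 0"
| "weight_rank (b # x) = weight_rank x + choose_partial_sum (length x) (weight x + (if b then 1 else 0))"

lemma weight_rank_bounds:
  "choose_partial_sum (length x) (weight x) \<le> weight_rank x \<and>
   weight_rank x < choose_partial_sum (length x) (Suc (weight x))"
proof (induction x)
  case (Cons b x)
  define k where "k = length x"
  define w where "w = weight x"
  have IH: "choose_partial_sum k w \<le> weight_rank x" "weight_rank x < choose_partial_sum k (Suc w)"
    using Cons unfolding k_def w_def by auto
  show ?case
  proof (cases b)
    case True
    have "choose_partial_sum k (Suc w) \<le> choose_partial_sum k (Suc (Suc w))"
      by (rule choose_partial_sum_mono) simp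
    with True IH show ?thesis
      by (simp add: choose_partial_sum_Suc_Suc flip: k_def w_def)
  next
    case False
    show ?thesis
    proof (cases w)
      case 0
      with IH False show ?thesis
        by (simp add: choose_partial_sum_def flip: k_def w_def)
    next
      case (Suc u)
      have "choose_partial_sum k u \<le> choose_partial_sum k (Suc u)"
        by (rule choose_partial_sum_mono) simp
      with False IH Suc show ?thesis
        by (simp add: choose_partial_sum_Suc_Suc flip: k_def w_def)
    qed
  qed
qed (simp add: choose_partial_sum_def)

lemma weight_rank_less_pow2: "weight_rank x < 2 ^ length x"
proof -
  have "weight_rank x < choose_partial_sum (length x) (Suc (weight x))"
    using weight_rank_bounds by blast
  also have "\<dots> \<le> choose_partial_sum (length x) (Suc (length x))"
    by (rule choose_partial_sum_mono) (simp add: weight_le_length)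
  finally show ?thesis
    by (simp add: choose_partial_sum_full)
qed

lemma weight_rank_less_if_weight_less:
  assumes "length x = length y" "weight x < weight y"
  shows "weight_rank x < weight_rank y"
proof -
  have "weight_rank x < choose_partial_sum (length x) (Suc (weight x))"
    using weight_rank_bounds by blast
  also have "\<dots> \<le> choose_partial_sum (length y) (weight y)"
    using assms by (simp add: choose_partial_sum_mono)
  also have "\<dots> \<le> weight_rank y"
    using weight_rank_bounds by blast
  finally show ?thesis .
qed

lemma weight_rank_inj: "length x = length y \<Longrightarrow> weight_rank x = weight_rank y \<Longrightarrow> x = y"
proof (induction x arbitrary: y)
  case (Cons a x)
  then obtain b y' where y: "y = b # y'" and len: "length x = length y'"
    by (cases y) auto
  have "weight (a # x) = weight y"
    using weight_rank_less_if_weight_less[of "a # x" y] weight_rank_less_if_weight_less[of y "a # x"]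
      Cons.prems by (metis less_irrefl nat_neq_iff)
  moreover from this have "weight_rank x = weight_rank y'"
    using Cons.prems len y by simp
  ultimately show ?case
    using Cons.IH len y by (auto split: if_splits)
qed simp

definition central_binomial_sum :: "nat \<Rightarrow> nat" where
  "central_binomial_sum k = (\<Sum>j<k. j choose (j div 2))"

lemma central_binomial_sum_Suc:
  "central_binomial_sum (Suc k) = central_binomial_sum k + (k choose (k div 2))"
  by (simp add: central_binomial_sum_def)

lemma weight_rank_le_if_weight_Suc:
  "length x = length y \<Longrightarrow> hamming_dist x y = 1 \<Longrightarrow> weight y = Suc (weight x) \<Longrightarrow>
    weight_rank y \<le> weight_rank x + central_binomial_sum (length x)"
proof (induction x y rule: hamming_dist.induct)
  case (1 a x b y)
  define k where "k = length x"
  have mid: "\<And>w. k choose w \<le> k choose (k div 2)"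
    by (rule binomial_maximum)
  show ?case
  proof (cases "a = b")
    case True
    with 1 have "weight_rank y \<le> weight_rank x + central_binomial_sum k" and "weight y = Suc (weight x)"
      by (auto simp: k_def split: if_splits)
    with True 1(2) mid[of "weight x + (if a then 1 else 0)"] show ?thesis
      by (simp add: choose_partial_sum_Suc central_binomial_sum_Suc flip: k_def)
  next
    case False
    with 1 have "x = y"
      by (simp add: hamming_dist_eq_0_iff)
    moreover from this False 1(4) have "\<not> a" "b"
      by (auto split: if_splits)
    ultimately show ?thesis
      using mid[of "weight x"] by (simp add: choose_partial_sum_Suc central_binomial_sum_Suc k_def)
  qed
qed auto

lemma weight_rank_le_if_hamming_dist_1:
  assumes "length x = length y" "hamming_dist x y = 1"
  shows "weight_rank x \<le> weight_rank y + central_binomial_sum (length x)"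
  using weight_Suc_if_hamming_dist_1[OF assms]
proof
  assume "weight y = Suc (weight x)"
  then show ?thesis
    using weight_rank_less_if_weight_less[OF assms(1)] by simp
next
  assume "weight x = Suc (weight y)"
  then show ?thesis
    using weight_rank_le_if_weight_Suc[of y x] assms hamming_dist_sym[of x y] by simp
qed

lemma binomial_middle_le: "k \<ge> 9 \<Longrightarrow> k choose (k div 2) \<le> 2 ^ (k - 2)"
proof (induction k rule: nat_induct_at_least)
  case base
  show ?case
    by (simp add: binomial_fact' fact_numeral)
next
  case (Suc k)
  have "Suc k choose (Suc k div 2) \<le> 2 * (k choose (k div 2))"
  proof (cases "Suc k div 2")
    case (Suc m)
    then show ?thesis
      using binomial_maximum[of k m] binomial_maximum[of k "Suc m"] by simp
  qed simp
  moreover have "(2::nat) ^ (Suc k - 2) = 2 * 2 ^ (k - 2)"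
    using Suc.hyps by (simp add: Suc_diff_le flip: power_Suc)
  ultimately show ?case
    using Suc.IH by simp
qed

lemma central_binomial_sum_less: "k \<ge> 12 \<Longrightarrow> central_binomial_sum k < 2 ^ (k - 2)"
proof (induction k rule: nat_induct_at_least)
  case base
  show ?case
    by (simp add: central_binomial_sum_def lessThan_nat_numeral binomial_fact' fact_numeral)
next
  case (Suc k)
  moreover have "(2::nat) ^ (Suc k - 2) = 2 ^ (k - 2) + 2 ^ (k - 2)"
    using Suc.hyps by (simp add: Suc_diff_le flip: mult_2 power_Suc)
  ultimately show ?case
    using binomial_middle_le[of k] by (simp add: central_binomial_sum_Suc)
qed

lemma str_f_le:
  assumes "\<exists>u\<in>V. \<exists>v\<in>V. E u v"
    and bound: "\<And>u v. u \<in> V \<Longrightarrow> v \<in> V \<Longrightarrow> E u v \<Longrightarrow> f u + f v \<le> b"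
  shows "str_f V E f \<le> b"
proof -
  let ?A = "{f u + f v | u v. u \<in> V \<and> v \<in> V \<and> E u v}"
  have "?A \<subseteq> {..b}"
    using bound by auto
  then have "finite ?A"
    by (rule finite_subset) simp
  moreover from assms(1) have "?A \<noteq> {}"
    by blast
  ultimately show ?thesis
    unfolding str_f_def by (rule Max.boundedI) (use bound in blast)
qed

lemma graph_strength_le_str_f:
  assumes edge: "\<exists>u\<in>V. \<exists>v\<in>V. E u v" and f: "bij_betw f V {1..card V}"
  shows "graph_strength V E \<le> str_f V E f"
proof -
  have "str_f V E g \<le> 2 * card V" if g: "bij_betw g V {1..card V}" for g
  proof (rule str_f_le[OF edge])
    fix u v assume "u \<in> V" "v \<in> V"
    then have "g u \<le> card V" "g v \<le> card V"
      using bij_betwE[OF g] by auto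
    then show "g u + g v \<le> 2 * card V"
      by simp
  qed
  then have "{str_f V E g | g. bij_betw g V {1..card V}} \<subseteq> {..2 * card V}"
    by blast
  then have "finite {str_f V E g | g. bij_betw g V {1..card V}}"
    by (rule finite_subset) simp
  with f show ?thesis
    unfolding graph_strength_def by (intro Min_le) blast+
qed

lemma card_hypercube_vertices: "card (hypercube_vertices n) = 2 ^ n"
  using card_lists_length_eq[of "UNIV :: bool set" n] by (simp add: hypercube_vertices_def)

lemma hypercube_adj_iff:
  "hypercube_adj n u v \<longleftrightarrow> length u = n \<and> length v = n \<and> hamming_dist u v = 1"
  unfolding hypercube_adj_def hypercube_vertices_def using hamming_dist_eq_card[of u v] by auto

lemma hypercube_has_edge:
  "\<exists>u\<in>hypercube_vertices (Suc k). \<exists>v\<in>hypercube_vertices (Suc k). hypercube_adj (Suc k) u v"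
proof -
  have "hypercube_adj (Suc k) (False # replicate k False) (True # replicate k False)"
    by (simp add: hypercube_adj_iff hamming_dist_eq_0_iff)
  then show ?thesis
    by (auto simp: hypercube_adj_def)
qed

definition parity_label :: "nat \<Rightarrow> bool list \<Rightarrow> nat" where
  "parity_label n v = (if even (weight v) then weight_rank (tl v) + 1 else 2 ^ n - weight_rank (tl v))"

lemma bij_betw_parity_label:
  "bij_betw (parity_label (Suc k)) (hypercube_vertices (Suc k)) {1..2 ^ Suc k}"
proof -
  have rank: "weight_rank (tl v) < 2 ^ k" if "v \<in> hypercube_vertices (Suc k)" for v
    using that weight_rank_less_pow2[of "tl v"] by (simp add: hypercube_vertices_def)
  have "inj_on (parity_label (Suc k)) (hypercube_vertices (Suc k))"
  proof
    fix u v assume uv: "u \<in> hypercube_vertices (Suc k)" "v \<in> hypercube_vertices (Suc k)"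
      and eq: "parity_label (Suc k) u = parity_label (Suc k) v"
    obtain a x b y where u: "u = a # x" and v: "v = b # y" and len: "length x = length y"
      using uv by (cases u; cases v) (auto simp: hypercube_vertices_def)
    have "weight_rank x = weight_rank y \<and> even (weight u) = even (weight v)"
      using eq rank[OF uv(1)] rank[OF uv(2)] unfolding parity_label_def u v
      by (cases "even (weight (a # x))"; cases "even (weight (b # y))") auto
    with len weight_rank_inj show "u = v"
      unfolding u v by (auto split: if_splits)
  qed
  moreover have "parity_label (Suc k) ` hypercube_vertices (Suc k) \<subseteq> {1..2 ^ Suc k}"
  proof (rule image_subsetI)
    fix v assume "v \<in> hypercube_vertices (Suc k)"
    with rank show "parity_label (Suc k) v \<in> {1..2 ^ Suc k}"
      by (fastforce simp: parity_label_def)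
  qed
  ultimately show ?thesis
    by (simp add: bij_betw_def card_hypercube_vertices card_image card_subset_eq)
qed

lemma parity_label_adj_le:
  assumes "hypercube_adj (Suc k) u v"
  shows "parity_label (Suc k) u + parity_label (Suc k) v \<le> 2 ^ Suc k + 1 + central_binomial_sum k"
proof -
  obtain a x b y where u: "u = a # x" and v: "v = b # y" and len: "length x = k" "length y = k"
    using assms by (cases u; cases v) (auto simp: hypercube_adj_iff)
  have dist: "hamming_dist (a # x) (b # y) = 1"
    using assms by (simp add: hypercube_adj_iff u v)
  then have "hamming_dist x y = 1 \<or> x = y"
    using hamming_dist_Cons_eq_1_iff[of x y a b] len by metis
  then have "weight_rank x \<le> weight_rank y + central_binomial_sum k \<and>
      weight_rank y \<le> weight_rank x + central_binomial_sum k"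
    using len weight_rank_le_if_hamming_dist_1[of x y] weight_rank_le_if_hamming_dist_1[of y x]
      hamming_dist_sym[of x y] by auto
  moreover have "even (weight u) \<noteq> even (weight v)"
    using weight_Suc_if_hamming_dist_1[of u v] dist len by (auto simp: u v)
  moreover have "weight_rank x < 2 ^ k" "weight_rank y < 2 ^ k"
    using weight_rank_less_pow2[of x] weight_rank_less_pow2[of y] len by simp_all
  ultimately show ?thesis
    unfolding parity_label_def u v by auto
qed

theorem hypercube_strength_le:
  "graph_strength (hypercube_vertices (Suc k)) (hypercube_adj (Suc k)) \<le> 2 ^ Suc k + 1 + central_binomial_sum k"
proof -
  have "graph_strength (hypercube_vertices (Suc k)) (hypercube_adj (Suc k))
      \<le> str_f (hypercube_vertices (Suc k)) (hypercube_adj (Suc k)) (parity_label (Suc k))"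
    using hypercube_has_edge bij_betw_parity_label[folded card_hypercube_vertices]
    by (rule graph_strength_le_str_f)
  also have "\<dots> \<le> 2 ^ Suc k + 1 + central_binomial_sum k"
    using hypercube_has_edge parity_label_adj_le by (rule str_f_le)
  finally show ?thesis .
qed

theorem corollary2p10:
  fixes n :: nat
  assumes "n \<ge> 14"
  shows "graph_strength (hypercube_vertices n) (hypercube_adj n) \<le> 2 ^ n + 2 ^ (n - 3) + 28"
proof -
  obtain k where n: "n = Suc k"
    using assms by (cases n) auto
  with assms have "central_binomial_sum k < 2 ^ (n - 3)"
    using central_binomial_sum_less[of k] by (simp add: numeral_3_eq_3 numeral_2_eq_2)
  with hypercube_strength_le[of k] show ?thesis
    unfolding n by simp
qed

end
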